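(* Let $N\ge1$, let $T$ be the rooted binary tree and $T_N$ the grafted binary tree. For every automorphism $g\in Aut(T)$ there exists an automorphism $\widehat g\in Aut(T_N)$ such that the homeomorphism of $\partial T$ induced by $g$ and the homeomorphism of $\partial T_N$ induced by $\widehat g$ are topologically conjugate.
   Context: The rooted binary tree $T$ has levels $V_i$, $|V_i|=2^i$, vertices labelled by words in $\{0,1\}^i$, with $w_1\cdots w_i$ joined to $w_1\cdots w_i0$ and $w_1\cdots w_i1$; $\partial T=\{0,1\}^{\mathbb N}$. The grafted binary tree $T_N$ has levels $V_0$ (the root), $V_1$ with $2^N$ vertices labelled $0,\ldots,2^N-1$ all joined to the root, and for $i\ge1$ each vertex $w_1\cdots w_i$ of $V_i$ joined to the two vertices $w_1\cdots w_i0$, $w_1\cdots w_i1$ of $V_{i+1}$; $\partial T_N=\{0,\ldots,2^N-1\}\times\prod_{i\ge2}\{0,1\}$ with the product topology. An automorphism of a tree is a bijection of vertices preserving adjacency (hence levels); it induces a homeomorphism of the boundary. *)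

theory Defs
  imports "HOL-Analysis.Analysis"
begin

text \<open>Vertices of both trees are words (lists of naturals); a vertex of level i is a word
of length i.  Letters of the binary tree are 0,1.\<close>

definition bin_tree :: "nat list set" where
  "bin_tree = {w. set w \<subseteq> {0, 1}}"

definition grafted_tree :: "nat \<Rightarrow> nat list set" where
  "grafted_tree N = {[]} \<union> {w. w \<noteq> [] \<and> hd w < 2 ^ N \<and> set (tl w) \<subseteq> {0, 1}}"

definition tree_edge :: "nat list \<Rightarrow> nat list \<Rightarrow> bool" where
  "tree_edge u v \<longleftrightarrow> (\<exists>a. v = u @ [a]) \<or> (\<exists>a. u = v @ [a])"

definition tree_aut :: "nat list set \<Rightarrow> (nat list \<Rightarrow> nat list) \<Rightarrow> bool" where
  "tree_aut V f \<longleftrightarrow> bij_betw f V V \<and>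
     (\<forall>u\<in>V. \<forall>v\<in>V. tree_edge u v \<longleftrightarrow> tree_edge (f u) (f v))"

text \<open>Boundaries: infinite rays, as sequences of letters (with the product topology of
the discrete space nat, restricted to the boundary set).\<close>
definition bin_bdry :: "(nat \<Rightarrow> nat) set" where
  "bin_bdry = {x. \<forall>i. x i \<in> {0, 1}}"

definition grafted_bdry :: "nat \<Rightarrow> (nat \<Rightarrow> nat) set" where
  "grafted_bdry N = {x. x 0 < 2 ^ N \<and> (\<forall>i\<ge>1. x i \<in> {0, 1})}"

definition induced_bdry :: "(nat list \<Rightarrow> nat list) \<Rightarrow> (nat \<Rightarrow> nat) \<Rightarrow> (nat \<Rightarrow> nat)" where
  "induced_bdry f x = (\<lambda>i. f (map x [0..<Suc i]) ! i)"

end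

theory Submission
  imports Defs
begin

text \<open>Collapse the levels \<open>1, \<dots>, N - 1\<close> of \<open>T\<close>: a vertex \<open>u\<close> of \<open>T\<close> of level \<open>\<ge> N\<close>
corresponds to the vertex of \<open>T\<^sub>N\<close> whose first letter is the number with binary digits
\<open>u\<^sub>1, \<dots>, u\<^sub>N\<close> and whose remaining letters are those of \<open>u\<close>. An automorphism of \<open>T\<close>
fixes the root (the only vertex of degree 2), preserves levels and maps children to
children, so transporting it along this correspondence gives an automorphism of
\<open>T\<^sub>N\<close>. On the boundary the correspondence is
\<open>x \<mapsto> (\<Sum>j<N. x\<^sub>j 2\<^sup>j, x\<^sub>N, x\<^sub>N\<^sub>+\<^sub>1, \<dots>)\<close>, a homeomorphism of product spaces
(every coordinate depends on finitely many coordinates) which conjugates the two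
boundary actions.\<close>

definition binary_value :: "nat \<Rightarrow> (nat \<Rightarrow> nat) \<Rightarrow> nat" where
  "binary_value n x = (\<Sum>j<n. x j * 2 ^ j)"

lemma binary_value_Suc: "binary_value (Suc n) x = x 0 + 2 * binary_value n (\<lambda>j. x (Suc j))"
  unfolding binary_value_def sum.lessThan_Suc_shift by (simp add: sum_distrib_left mult_ac)

lemma binary_value_cong: "(\<And>j. j < n \<Longrightarrow> x j = y j) \<Longrightarrow> binary_value n x = binary_value n y"
  unfolding binary_value_def by (intro sum.cong) auto

lemma binary_value_less: "(\<And>j. j < n \<Longrightarrow> x j \<le> 1) \<Longrightarrow> binary_value n x < 2 ^ n"
proof (induction n arbitrary: x)
  case 0 then show ?case by (simp add: binary_value_def)
next
  case (Suc n)
  have "binary_value n (\<lambda>j. x (Suc j)) < 2 ^ n" and "x 0 \<le> 1" using Suc by auto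
  then show ?case by (simp add: binary_value_Suc)
qed

lemma binary_value_digit:
  assumes "\<And>j. j < n \<Longrightarrow> x j \<le> 1" and "i < n"
  shows "binary_value n x div 2 ^ i mod 2 = x i"
  using assms
proof (induction n arbitrary: x i)
  case 0 then show ?case by simp
next
  case (Suc n)
  have "x 0 \<le> 1" using Suc.prems by simp
  then have "binary_value (Suc n) x mod 2 = x 0" and
    "binary_value (Suc n) x div 2 = binary_value n (\<lambda>j. x (Suc j))"
    by (auto simp: binary_value_Suc)
  with Suc show ?case by (cases i) (auto simp: div_mult2_eq)
qed

lemma binary_value_digits: "binary_value n (\<lambda>j. y div 2 ^ j mod 2) = y mod 2 ^ n"
proof (induction n arbitrary: y)
  case 0 then show ?case by (simp add: binary_value_def)
next
  case (Suc n)
  have "binary_value (Suc n) (\<lambda>j. y div 2 ^ j mod 2) = y mod 2 + 2 * (y div 2 mod 2 ^ n)"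
    using Suc[of "y div 2"] by (simp add: binary_value_Suc div_mult2_eq)
  also have "\<dots> = y mod 2 ^ Suc n"
    by (simp add: mod_mult2_eq)
  finally show ?case .
qed

lemma tree_autD:
  assumes "tree_aut V f"
  shows "bij_betw f V V" "u \<in> V \<Longrightarrow> v \<in> V \<Longrightarrow> tree_edge (f u) (f v) \<longleftrightarrow> tree_edge u v"
  using assms unfolding tree_aut_def by auto

lemma tree_aut_byWitness:
  assumes "\<forall>u\<in>V. f' (f u) = u" "\<forall>u\<in>V. f (f' u) = u" "f ` V \<subseteq> V" "f' ` V \<subseteq> V"
    and "\<And>u v. u \<in> V \<Longrightarrow> v \<in> V \<Longrightarrow> tree_edge u v \<Longrightarrow> tree_edge (f u) (f v)"
    and "\<And>u v. u \<in> V \<Longrightarrow> v \<in> V \<Longrightarrow> tree_edge u v \<Longrightarrow> tree_edge (f' u) (f' v)"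
  shows "tree_aut V f"
  unfolding tree_aut_def
proof (intro conjI ballI)
  show "bij_betw f V V"
    using assms(1-4) by (intro bij_betw_byWitness[where f' = f']) auto
  show "tree_edge u v \<longleftrightarrow> tree_edge (f u) (f v)" if "u \<in> V" "v \<in> V" for u v
    using assms that by (metis image_subset_iff)
qed

lemma tree_aut_inv_into:
  assumes "tree_aut V f"
  shows "tree_aut V (inv_into V f)"
proof -
  have bij: "bij_betw f V V"
    using assms by (rule tree_autD)
  have bij_inv: "bij_betw (inv_into V f) V V"
    using bij by (rule bij_betw_inv_into)
  have "tree_edge u v \<longleftrightarrow> tree_edge (inv_into V f u) (inv_into V f v)" if "u \<in> V" "v \<in> V" for u v
  proof -
    have "inv_into V f u \<in> V" "inv_into V f v \<in> V"
      using bij_inv that by (auto simp: bij_betw_def)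
    moreover have "f (inv_into V f u) = u" "f (inv_into V f v) = v"
      using bij that by (auto simp: bij_betw_def f_inv_into_f)
    ultimately show ?thesis
      using tree_autD(2)[OF assms] by metis
  qed
  with bij_inv show ?thesis
    by (simp add: tree_aut_def)
qed

definition neighbours :: "nat list set \<Rightarrow> nat list \<Rightarrow> nat list set" where
  "neighbours V w = {v \<in> V. tree_edge w v}"

lemma tree_aut_neighbours:
  assumes "tree_aut V f" "w \<in> V"
  shows "neighbours V (f w) = f ` neighbours V w"
proof
  have bij: "bij_betw f V V" and edge: "\<And>u v. u \<in> V \<Longrightarrow> v \<in> V \<Longrightarrow> tree_edge (f u) (f v) \<longleftrightarrow> tree_edge u v"
    using tree_autD[OF assms(1)] by blast+
  show "f ` neighbours V w \<subseteq> neighbours V (f w)"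
    using bij edge assms(2) by (auto simp: neighbours_def bij_betw_def)
  show "neighbours V (f w) \<subseteq> f ` neighbours V w"
  proof
    fix v assume v: "v \<in> neighbours V (f w)"
    then obtain u where "u \<in> V" "v = f u"
      using bij by (auto simp: neighbours_def bij_betw_def)
    with v edge assms(2) show "v \<in> f ` neighbours V w"
      by (auto simp: neighbours_def)
  qed
qed

lemma bin_tree_butlast: "w \<in> bin_tree \<Longrightarrow> butlast w \<in> bin_tree"
  by (auto simp: bin_tree_def dest: in_set_butlastD)

lemma bin_tree_snoc: "u @ [a] \<in> bin_tree \<longleftrightarrow> u \<in> bin_tree \<and> a \<in> {0, 1}"
  by (auto simp: bin_tree_def)

lemma bin_tree_root_neighbours: "neighbours bin_tree [] = {[0], [1]}"
  by (auto simp: neighbours_def tree_edge_def bin_tree_def)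

lemma bin_tree_three_neighbours:
  assumes "w \<in> bin_tree" "w \<noteq> []"
  shows "{w @ [0], w @ [1], butlast w} \<subseteq> neighbours bin_tree w"
    and "card {w @ [0], w @ [1], butlast w} = 3"
proof -
  have "tree_edge w (butlast w)"
    unfolding tree_edge_def by (metis append_butlast_last_id assms(2))
  with assms show "{w @ [0], w @ [1], butlast w} \<subseteq> neighbours bin_tree w"
    by (auto simp: neighbours_def tree_edge_def bin_tree_snoc bin_tree_butlast)
  have "butlast w \<noteq> w @ [a]" for a
    by (metis Suc_n_not_le_n diff_le_self length_append_singleton length_butlast)
  from this[of 0] this[of 1] show "card {w @ [0], w @ [1], butlast w} = 3"
    by simp
qed

text \<open>The root is the only vertex with two neighbours; all others have three.\<close>
lemma tree_aut_root:
  assumes "tree_aut bin_tree f"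
  shows "f [] = []"
proof (rule ccontr)
  assume nonroot: "f [] \<noteq> []"
  have root_in: "f [] \<in> bin_tree"
    using tree_autD(1)[OF assms] unfolding bij_betw_def by (auto simp: bin_tree_def)
  have "[] \<in> bin_tree"
    by (simp add: bin_tree_def)
  then have "neighbours bin_tree (f []) = f ` {[0], [1]}"
    using tree_aut_neighbours[OF assms] by (simp add: bin_tree_root_neighbours)
  then have finite: "finite (neighbours bin_tree (f []))"
    and at_most_two: "card (neighbours bin_tree (f [])) \<le> 2"
    using card_image_le[of "{[0::nat], [1]}" f] by simp_all
  have "3 \<le> card (neighbours bin_tree (f []))"
    using card_mono[OF finite bin_tree_three_neighbours(1)[OF root_in nonroot]]
    unfolding bin_tree_three_neighbours(2)[OF root_in nonroot] .
  with at_most_two show False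
    by linarith
qed

lemma tree_aut_length:
  assumes "tree_aut bin_tree f" "w \<in> bin_tree"
  shows "length (f w) = length w"
  using assms
proof (induction "length w" arbitrary: f w rule: less_induct)
  case less
  show ?case
  proof (cases w rule: rev_cases)
    case Nil
    then show ?thesis
      using tree_aut_root[OF less.prems(1)] by simp
  next
    case (snoc v a)
    have v: "v \<in> bin_tree"
      using less.prems(2) snoc by (simp add: bin_tree_snoc)
    have length_v: "length (f v) = length v"
      using less.hyps[of v f] less.prems(1) snoc v by simp
    have "tree_edge v w"
      using snoc by (simp add: tree_edge_def)
    then have "tree_edge (f v) (f w)"
      using tree_autD(2)[OF less.prems(1) v less.prems(2)] by blast
    then consider b where "f w = f v @ [b]" | b where "f v = f w @ [b]"
      unfolding tree_edge_def by blast
    then show ?thesis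
    proof cases
      case 1
      with length_v snoc show ?thesis by simp
    next
      case 2
      \<comment> \<open>Then \<open>f w\<close> lies two levels above \<open>w\<close>; the induction hypothesis for the inverse
        automorphism at the shorter word \<open>f w\<close> rules this out.\<close>
      let ?g = "inv_into bin_tree f"
      have shorter: "length (f w) < length w"
        using 2 length_v snoc by (metis length_append_singleton lessI less_SucI)
      have "f w \<in> bin_tree" "?g (f w) = w"
        using tree_autD(1)[OF less.prems(1)] less.prems(2) by (auto simp: bij_betw_def)
      then have "length w = length (f w)"
        using less.hyps[OF shorter tree_aut_inv_into[OF less.prems(1)]] by simp
      with shorter show ?thesis by simp
    qed
  qed
qed

definition bin_tree_morphism :: "(nat list \<Rightarrow> nat list) \<Rightarrow> bool" where
  "bin_tree_morphism f \<longleftrightarrow> (\<forall>u\<in>bin_tree. f u \<in> bin_tree \<and> length (f u) = length u) \<and>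
     (\<forall>u a. u @ [a] \<in> bin_tree \<longrightarrow> (\<exists>b. f (u @ [a]) = f u @ [b]))"

lemma bin_tree_morphismD:
  assumes "bin_tree_morphism f" "u \<in> bin_tree"
  shows "f u \<in> bin_tree" "length (f u) = length u"
  using assms unfolding bin_tree_morphism_def by auto

lemma bin_tree_morphism_snoc:
  assumes "bin_tree_morphism f" "u @ [a] \<in> bin_tree"
  obtains b where "f (u @ [a]) = f u @ [b]"
  using assms unfolding bin_tree_morphism_def by blast

lemma tree_aut_bin_tree_morphism:
  assumes "tree_aut bin_tree f"
  shows "bin_tree_morphism f"
  unfolding bin_tree_morphism_def
proof (intro conjI ballI allI impI)
  show "f u \<in> bin_tree" "length (f u) = length u" if "u \<in> bin_tree" for u
    using tree_autD(1)[OF assms] tree_aut_length[OF assms that] that by (auto simp: bij_betw_def)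
  fix u a assume ua: "u @ [a] \<in> bin_tree"
  then have u: "u \<in> bin_tree"
    by (simp add: bin_tree_snoc)
  have "tree_edge u (u @ [a])"
    by (simp add: tree_edge_def)
  then have "tree_edge (f u) (f (u @ [a]))"
    using tree_autD(2)[OF assms u ua] by blast
  moreover have "length (f (u @ [a])) = Suc (length (f u))"
    using tree_aut_length[OF assms ua] tree_aut_length[OF assms u] by simp
  ultimately show "\<exists>b. f (u @ [a]) = f u @ [b]"
    unfolding tree_edge_def by auto
qed

lemma bin_bdry_prefix: "x \<in> bin_bdry \<Longrightarrow> map x [0..<m] \<in> bin_tree"
  unfolding bin_bdry_def bin_tree_def by (simp add: image_subset_iff)

lemma bin_tree_morphism_prefix:
  assumes f: "bin_tree_morphism f" and x: "x \<in> bin_bdry"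
  shows "map (induced_bdry f x) [0..<m] = f (map x [0..<m])"
proof (induction m)
  case 0
  have "length (f []) = 0"
    using bin_tree_morphismD(2)[OF f bin_bdry_prefix[OF x, of 0]] by simp
  then show ?case by simp
next
  case (Suc m)
  obtain b where b: "f (map x [0..<m] @ [x m]) = f (map x [0..<m]) @ [b]"
    using bin_tree_morphism_snoc[OF f] bin_bdry_prefix[OF x, of "Suc m"] by auto
  have "length (f (map x [0..<m])) = m"
    using bin_tree_morphismD(2)[OF f bin_bdry_prefix[OF x]] by simp
  with b have "induced_bdry f x m = b"
    by (simp add: induced_bdry_def nth_append)
  with Suc.IH b show ?case
    by simp
qed

definition ungraft :: "nat \<Rightarrow> nat list \<Rightarrow> nat list" where
  "ungraft N w = map (\<lambda>j. hd w div 2 ^ j mod 2) [0..<N] @ tl w"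

text \<open>Beyond the end of \<open>u\<close> the letters \<open>u ! j\<close> are unspecified, so \<open>graft N u\<close> is
meaningful only for \<open>N \<le> length u\<close>.\<close>
definition graft :: "nat \<Rightarrow> nat list \<Rightarrow> nat list" where
  "graft N u = binary_value N (\<lambda>j. u ! j) # drop N u"

definition grafted_lift :: "nat \<Rightarrow> (nat list \<Rightarrow> nat list) \<Rightarrow> nat list \<Rightarrow> nat list" where
  "grafted_lift N f w = (if w = [] then [] else graft N (f (ungraft N w)))"

lemma bin_tree_nth_le_1: "u \<in> bin_tree \<Longrightarrow> j < length u \<Longrightarrow> u ! j \<le> 1"
  unfolding bin_tree_def using nth_mem by fastforce

lemma ungraft_in_bin_tree:
  assumes "w \<in> grafted_tree N"
  shows "ungraft N w \<in> bin_tree"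
  using assms by (cases w) (auto simp: ungraft_def bin_tree_def grafted_tree_def)

lemma length_ungraft: "w \<noteq> [] \<Longrightarrow> length (ungraft N w) = N + (length w - 1)"
  by (simp add: ungraft_def)

lemma graft_in_grafted_tree:
  assumes "u \<in> bin_tree" "N \<le> length u"
  shows "graft N u \<in> grafted_tree N"
proof -
  have "binary_value N (\<lambda>j. u ! j) < 2 ^ N"
    using assms bin_tree_nth_le_1 by (intro binary_value_less) auto
  moreover have "set (drop N u) \<subseteq> {0, 1}"
    using assms set_drop_subset by (fastforce simp: bin_tree_def)
  ultimately show ?thesis
    by (simp add: graft_def grafted_tree_def)
qed

lemma graft_not_Nil: "graft N u \<noteq> []"
  by (simp add: graft_def)

lemma length_graft: "length (graft N u) = length u - N + 1"
  by (simp add: graft_def)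

lemma graft_ungraft:
  assumes "w \<in> grafted_tree N" "w \<noteq> []"
  shows "graft N (ungraft N w) = w"
proof -
  have "binary_value N (\<lambda>j. ungraft N w ! j) = binary_value N (\<lambda>j. hd w div 2 ^ j mod 2)"
    by (intro binary_value_cong) (simp add: ungraft_def nth_append)
  also have "\<dots> = hd w"
    using assms by (simp add: binary_value_digits grafted_tree_def)
  finally show ?thesis
    using assms(2) by (simp add: graft_def ungraft_def)
qed

lemma ungraft_graft:
  assumes "u \<in> bin_tree" "N \<le> length u"
  shows "ungraft N (graft N u) = u"
proof -
  have "map (\<lambda>j. binary_value N (\<lambda>j. u ! j) div 2 ^ j mod 2) [0..<N] = map (\<lambda>j. u ! j) [0..<N]"
    using assms bin_tree_nth_le_1 by (intro map_cong refl binary_value_digit) auto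
  also have "\<dots> = take N u"
    using assms(2) by (intro nth_equalityI) auto
  finally show ?thesis
    by (simp add: ungraft_def graft_def)
qed

lemma ungraft_snoc: "w \<noteq> [] \<Longrightarrow> ungraft N (w @ [a]) = ungraft N w @ [a]"
  by (simp add: ungraft_def)

lemma graft_snoc:
  assumes "N \<le> length u"
  shows "graft N (u @ [b]) = graft N u @ [b]"
proof -
  have "binary_value N (\<lambda>j. (u @ [b]) ! j) = binary_value N (\<lambda>j. u ! j)"
    using assms by (intro binary_value_cong) (simp add: nth_append)
  with assms show ?thesis
    by (simp add: graft_def)
qed

context
  fixes N :: nat and f :: "nat list \<Rightarrow> nat list"
  assumes morphism: "bin_tree_morphism f"
begin

lemma bin_tree_morphism_ungraft:
  assumes "w \<in> grafted_tree N" "w \<noteq> []"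
  shows "f (ungraft N w) \<in> bin_tree" "length (f (ungraft N w)) = N + (length w - 1)"
  using bin_tree_morphismD[OF morphism ungraft_in_bin_tree[OF assms(1)]] length_ungraft[OF assms(2)]
  by simp_all

lemma grafted_lift_in_grafted_tree:
  assumes "w \<in> grafted_tree N"
  shows "grafted_lift N f w \<in> grafted_tree N"
proof (cases "w = []")
  case False
  with bin_tree_morphism_ungraft[OF assms] show ?thesis
    by (simp add: grafted_lift_def graft_in_grafted_tree)
qed (simp add: grafted_lift_def grafted_tree_def)

lemma length_grafted_lift:
  assumes "w \<in> grafted_tree N"
  shows "length (grafted_lift N f w) = length w"
  using bin_tree_morphism_ungraft[OF assms]
  by (cases "w = []") (simp_all add: grafted_lift_def length_graft)

lemma grafted_lift_inverse:
  assumes inverse: "\<forall>u\<in>bin_tree. f' (f u) = u" and w: "w \<in> grafted_tree N"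
  shows "grafted_lift N f' (grafted_lift N f w) = w"
proof (cases "w = []")
  case True
  then show ?thesis by (simp add: grafted_lift_def)
next
  case False
  have "ungraft N (graft N (f (ungraft N w))) = f (ungraft N w)"
    using bin_tree_morphism_ungraft[OF w False] by (intro ungraft_graft) simp_all
  then have "grafted_lift N f' (grafted_lift N f w) = graft N (f' (f (ungraft N w)))"
    using False by (simp add: grafted_lift_def graft_def)
  also have "\<dots> = w"
    using inverse ungraft_in_bin_tree[OF w] graft_ungraft[OF w False] by simp
  finally show ?thesis .
qed

lemma grafted_lift_snoc:
  assumes u: "u \<in> grafted_tree N" and ua: "u @ [a] \<in> grafted_tree N"
  obtains b where "grafted_lift N f (u @ [a]) = grafted_lift N f u @ [b]"
proof (cases "u = []")
  case True
  then have "length (grafted_lift N f (u @ [a])) = 1"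
    using length_grafted_lift[OF ua] by simp
  with True that show ?thesis
    by (auto simp: grafted_lift_def length_Suc_conv)
next
  case False
  have "ungraft N u @ [a] \<in> bin_tree"
    using ungraft_in_bin_tree[OF ua] ungraft_snoc[OF False] by simp
  then obtain b where "f (ungraft N u @ [a]) = f (ungraft N u) @ [b]"
    using bin_tree_morphism_snoc[OF morphism] by blast
  moreover have "N \<le> length (f (ungraft N u))"
    using bin_tree_morphism_ungraft(2)[OF u False] by simp
  ultimately have "grafted_lift N f (u @ [a]) = grafted_lift N f u @ [b]"
    using False by (simp add: grafted_lift_def ungraft_snoc graft_snoc)
  with that show ?thesis .
qed

lemma tree_edge_grafted_lift:
  assumes "u \<in> grafted_tree N" "v \<in> grafted_tree N" "tree_edge u v"
  shows "tree_edge (grafted_lift N f u) (grafted_lift N f v)"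
  using assms grafted_lift_snoc unfolding tree_edge_def by metis

end

lemma tree_aut_grafted_lift:
  assumes "tree_aut bin_tree g"
  shows "tree_aut (grafted_tree N) (grafted_lift N g)"
proof -
  let ?g' = "inv_into bin_tree g"
  have lift_morphisms: "bin_tree_morphism g" "bin_tree_morphism ?g'"
    using assms tree_aut_inv_into tree_aut_bin_tree_morphism by blast+
  have "bij_betw g bin_tree bin_tree"
    using assms by (rule tree_autD)
  then have "\<forall>u\<in>bin_tree. ?g' (g u) = u" "\<forall>u\<in>bin_tree. g (?g' u) = u"
    by (simp_all add: bij_betw_def f_inv_into_f)
  then show ?thesis
    using grafted_lift_inverse[OF lift_morphisms(1)] grafted_lift_inverse[OF lift_morphisms(2)]
      grafted_lift_in_grafted_tree[OF lift_morphisms(1)] grafted_lift_in_grafted_tree[OF lift_morphisms(2)]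
      tree_edge_grafted_lift[OF lift_morphisms(1)] tree_edge_grafted_lift[OF lift_morphisms(2)]
    by (intro tree_aut_byWitness[where f' = "grafted_lift N ?g'"]) auto
qed

definition graft_ray :: "nat \<Rightarrow> (nat \<Rightarrow> nat) \<Rightarrow> nat \<Rightarrow> nat" where
  "graft_ray N x = (\<lambda>i. if i = 0 then binary_value N x else x (N + i - 1))"

definition ungraft_ray :: "nat \<Rightarrow> (nat \<Rightarrow> nat) \<Rightarrow> nat \<Rightarrow> nat" where
  "ungraft_ray N y = (\<lambda>i. if i < N then y 0 div 2 ^ i mod 2 else y (i + 1 - N))"

lemma bin_bdry_le_1:
  assumes "x \<in> bin_bdry"
  shows "x j \<le> 1"
proof -
  have "x j \<in> {0, 1}"
    using assms unfolding bin_bdry_def by blast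
  then show ?thesis
    by auto
qed

lemma continuous_on_coordinate: "continuous_on S (\<lambda>x :: nat \<Rightarrow> nat. x j)"
  by (rule continuous_on_subset[OF continuous_on_product_coordinates subset_UNIV])

lemma graft_ray_ungraft_ray:
  assumes "y \<in> grafted_bdry N"
  shows "graft_ray N (ungraft_ray N y) = y"
proof
  fix i
  have "binary_value N (ungraft_ray N y) = binary_value N (\<lambda>j. y 0 div 2 ^ j mod 2)"
    by (intro binary_value_cong) (simp add: ungraft_ray_def)
  also have "\<dots> = y 0"
    using assms by (simp add: binary_value_digits grafted_bdry_def)
  finally have "binary_value N (ungraft_ray N y) = y 0" .
  then show "graft_ray N (ungraft_ray N y) i = y i"
    by (cases i) (simp_all add: graft_ray_def ungraft_ray_def)
qed

lemma ungraft_ray_graft_ray: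
  assumes "x \<in> bin_bdry"
  shows "ungraft_ray N (graft_ray N x) = x"
proof
  fix i
  show "ungraft_ray N (graft_ray N x) i = x i"
    using binary_value_digit[of N x i] bin_bdry_le_1[OF assms]
    by (simp add: graft_ray_def ungraft_ray_def)
qed

lemma graft_ray_in_grafted_bdry: "x \<in> bin_bdry \<Longrightarrow> graft_ray N x \<in> grafted_bdry N"
  using binary_value_less[of N x] bin_bdry_le_1 by (auto simp: graft_ray_def bin_bdry_def grafted_bdry_def)

lemma ungraft_ray_in_bin_bdry: "y \<in> grafted_bdry N \<Longrightarrow> ungraft_ray N y \<in> bin_bdry"
  by (auto simp: ungraft_ray_def bin_bdry_def grafted_bdry_def)

lemma continuous_on_binary_value: "continuous_on S (binary_value N)"
  unfolding binary_value_def
  by (intro continuous_on_sum continuous_on_mult' continuous_on_coordinate continuous_on_const)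

lemma continuous_on_graft_ray: "continuous_on S (graft_ray N)"
  unfolding graft_ray_def
proof (intro continuous_on_coordinatewise_then_product)
  fix i
  show "continuous_on S (\<lambda>x. if i = 0 then binary_value N x else x (N + i - 1))"
    by (cases "i = 0") (simp_all add: continuous_on_binary_value continuous_on_coordinate)
qed

lemma continuous_on_ungraft_ray: "continuous_on S (ungraft_ray N)"
  unfolding ungraft_ray_def
proof (intro continuous_on_coordinatewise_then_product)
  fix i
  have "continuous_on S (\<lambda>y. (\<lambda>n :: nat. n div 2 ^ i mod 2) (y 0))"
    by (rule continuous_on_compose2[OF Topological_Spaces.continuous_on_discrete continuous_on_coordinate])
      (rule subset_UNIV)
  then show "continuous_on S (\<lambda>y. if i < N then y 0 div 2 ^ i mod 2 else y (i + 1 - N))"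
    by (cases "i < N") (simp_all add: continuous_on_coordinate)
qed

lemma homeomorphic_map_graft_ray:
  "homeomorphic_map (top_of_set bin_bdry) (top_of_set (grafted_bdry N)) (graft_ray N)"
  unfolding homeomorphic_map_maps homeomorphic_maps_def
proof (intro exI conjI)
  show "continuous_map (top_of_set bin_bdry) (top_of_set (grafted_bdry N)) (graft_ray N)"
    unfolding continuous_map_in_subtopology continuous_map_iff_continuous
    using continuous_on_graft_ray graft_ray_in_grafted_bdry by (simp add: image_subset_iff_funcset)
  show "continuous_map (top_of_set (grafted_bdry N)) (top_of_set bin_bdry) (ungraft_ray N)"
    unfolding continuous_map_in_subtopology continuous_map_iff_continuous
    using continuous_on_ungraft_ray ungraft_ray_in_bin_bdry by (simp add: image_subset_iff_funcset)
qed (simp_all add: graft_ray_ungraft_ray ungraft_ray_graft_ray)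

lemma graft_ray_prefix: "map (graft_ray N x) [0..<Suc i] = graft N (map x [0..<N + i])"
proof -
  have "binary_value N (\<lambda>j. map x [0..<N + i] ! j) = binary_value N x"
    by (intro binary_value_cong) simp
  moreover have "map (\<lambda>j. graft_ray N x (Suc j)) [0..<i] = drop N (map x [0..<N + i])"
    by (intro nth_equalityI) (simp_all add: graft_ray_def)
  ultimately show ?thesis
    by (simp add: graft_def graft_ray_def map_upt_Suc del: upt_Suc)
qed

lemma graft_ray_induced_bdry:
  assumes morphism: "bin_tree_morphism g" and "x \<in> bin_bdry"
  shows "graft_ray N (induced_bdry g x) = induced_bdry (grafted_lift N g) (graft_ray N x)"
proof
  fix i
  have "graft_ray N (induced_bdry g x) i = graft N (g (map x [0..<N + i])) ! i"
    using nth_map_upt[of i "Suc i" 0 "graft_ray N (induced_bdry g x)"]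
    by (simp add: graft_ray_prefix bin_tree_morphism_prefix[OF morphism assms(2)] del: upt_Suc)
  also have "\<dots> = grafted_lift N g (graft N (map x [0..<N + i])) ! i"
    using ungraft_graft[OF bin_bdry_prefix[OF assms(2)]] by (simp add: grafted_lift_def graft_not_Nil)
  also have "\<dots> = induced_bdry (grafted_lift N g) (graft_ray N x) i"
    by (simp add: induced_bdry_def graft_ray_prefix del: upt_Suc)
  finally show "graft_ray N (induced_bdry g x) i = induced_bdry (grafted_lift N g) (graft_ray N x) i" .
qed

theorem lemma2p5:
  fixes N :: nat and g :: "nat list \<Rightarrow> nat list"
  assumes "N \<ge> 1" and "tree_aut bin_tree g"
  shows "\<exists>gh. tree_aut (grafted_tree N) gh \<and>
           (\<exists>h. homeomorphic_map (top_of_set bin_bdry) (top_of_set (grafted_bdry N)) h \<and>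
                (\<forall>x\<in>bin_bdry. h (induced_bdry g x) = induced_bdry gh (h x)))"
proof (intro exI conjI)
  show "tree_aut (grafted_tree N) (grafted_lift N g)"
    using assms(2) by (rule tree_aut_grafted_lift)
  show "homeomorphic_map (top_of_set bin_bdry) (top_of_set (grafted_bdry N)) (graft_ray N)"
    by (rule homeomorphic_map_graft_ray)
  show "\<forall>x\<in>bin_bdry. graft_ray N (induced_bdry g x) = induced_bdry (grafted_lift N g) (graft_ray N x)"
    using graft_ray_induced_bdry[OF tree_aut_bin_tree_morphism[OF assms(2)]] by blast
qed

end
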